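(* The variable $w(x,t)=u(x,t)-\kappa\left(p(x,t)\right)$, $x\in[0,1]$, where $p$ is the predictor state defined below, satisfies $$w_t(x,t)=v\left(u(x,t)\right)w_x(x,t),\qquad w(1,t)=0 .$$ Moreover, the ODE $\dot{X}(t)=f\left(X(t),u(0,t)\right)$ can be written as $$\dot{X}(t)=f\left(X(t),\kappa\left(X(t)\right)+w(0,t)\right).$$
   Context: Consider the PDE-ODE cascade $\dot{X}(t)=f\left(X(t),u(0,t)\right)$, $u_t(x,t)=v\left(u(x,t)\right)u_x(x,t)$, $u(1,t)=U(t)$, with $X\in\mathbb{R}^n$, $u\in\mathbb{R}$, $x\in[0,1]$, $t\geq0$, where $f:\mathbb{R}^n\times\mathbb{R}\to\mathbb{R}^n$ is continuously differentiable with $f(0,0)=0$, and $v:\mathbb{R}\to\mathbb{R}_+$ is twice continuously differentiable with $v(u)\geq\underline{v}>0$ for all $u$. Let $\kappa:\mathbb{R}^n\to\mathbb{R}$ be a twice continuously differentiable feedback law with $\kappa(0)=0$ (rendering $\dot X=f(X,\kappa(X)+\omega)$ input-to-state stable with respect to $\omega$). The system is in closed loop with the control $U(t)=\kappa\left(p(1,t)\right)$, where the predictor state is $$p(x,t)=X(t)+\int_0^{x}f\left(p(y,t),u(y,t)\right)\Gamma\left(u(y,t),u_y(y,t),y\right)dy,\quad x\in[0,1],$$ with $$\Gamma\left(u(x,t),u_x(x,t),x\right)=\frac{1}{v\left(u(x,t)\right)}-\frac{x\,v'\left(u(x,t)\right)u_x(x,t)}{v\left(u(x,t)\right)^2}.$$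 Solutions are assumed to satisfy the feasibility condition $-M<\frac{v'(u(x,t))u_x(x,t)}{v(u(x,t))}<1$ for all $x\in[0,1]$, $t\geq0$, for some $M>0$, so that $p$ is well defined. *)

theory Defs
  imports "HOL-Analysis.Analysis"
begin

text \<open>The weight Gamma(u, u_x, x) = 1/v(u) - x v'(u) u_x / v(u)^2.\<close>
definition Gam :: "(real \<Rightarrow> real) \<Rightarrow> real \<Rightarrow> real \<Rightarrow> real \<Rightarrow> real" where
  "Gam v a b x = 1 / v a - x * deriv v a * b / (v a)^2"

definition class_K :: "(real \<Rightarrow> real) \<Rightarrow> bool" where
  "class_K \<gamma> \<longleftrightarrow> continuous_on {0..} \<gamma> \<and> \<gamma> 0 = 0 \<and> strict_mono_on {0..} \<gamma>"

definition class_KL :: "(real \<Rightarrow> real \<Rightarrow> real) \<Rightarrow> bool" where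
  "class_KL \<beta> \<longleftrightarrow> continuous_on ({0..} \<times> {0..}) (\<lambda>(s,t). \<beta> s t)
     \<and> (\<forall>t\<ge>0. class_K (\<lambda>s. \<beta> s t))
     \<and> (\<forall>s\<ge>0. (\<forall>t1 t2. 0 \<le> t1 \<and> t1 \<le> t2 \<longrightarrow> \<beta> s t2 \<le> \<beta> s t1)
                \<and> ((\<lambda>t. \<beta> s t) \<longlongrightarrow> 0) at_top)"

definition ISS :: "('x::real_normed_vector \<Rightarrow> real \<Rightarrow> 'x) \<Rightarrow> bool" where
  "ISS F \<longleftrightarrow> (\<exists>\<beta> \<gamma>. class_KL \<beta> \<and> class_K \<gamma> \<and>
     (\<forall>Y \<omega>. continuous_on {0..} \<omega> \<and>
        (\<forall>t\<ge>0. (Y has_vector_derivative F (Y t) (\<omega> t)) (at t within {0..}))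
        \<longrightarrow> (\<forall>t\<ge>0. norm (Y t) \<le> \<beta> (norm (Y 0)) t + \<gamma> (Sup ((\<lambda>s. \<bar>\<omega> s\<bar>) ` {0..t})))))"

end

theory Submission
  imports Defs
begin

text \<open>For fixed \<open>t\<close> the predictor \<open>p(\<cdot>,t)\<close> solves the integral equation
  \<open>p(x) = X + \<integral>\<^sub>0\<^sup>x \<Gamma> f(p,u)\<close>, so \<open>p\<^sub>x = \<Gamma> f(p,u)\<close>. Along solutions of \<open>u\<^sub>t = v(u) u\<^sub>x\<close>
  the weight satisfies \<open>\<partial>\<^sub>t \<Gamma> = v'(u) u\<^sub>x \<Gamma> + v(u) \<partial>\<^sub>x \<Gamma>\<close>, and this makes \<open>q = v(u) p\<^sub>x\<close>
  a solution of the equation obtained by formally differentiating the integral equation in \<open>t\<close>,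
  with initial value \<open>q(0) = f(X, u(0,t)) = X'\<close>. A Gronwall estimate for the remainder
  \<open>p(\<cdot>,t+h) - p(\<cdot>,t) - h q\<close> shows that \<open>p\<close> is differentiable in \<open>t\<close> with \<open>p\<^sub>t = v(u) p\<^sub>x\<close>.
  Hence \<open>w = u - \<kappa>(p)\<close> satisfies \<open>w\<^sub>t = u\<^sub>t - \<kappa>'(p) p\<^sub>t = v(u) (u\<^sub>x - \<kappa>'(p) p\<^sub>x) = v(u) w\<^sub>x\<close>;
  the boundary condition is the control law, and \<open>p(0,t) = X(t)\<close> rewrites the ODE.\<close>

lemma continuous_on_slice:
  fixes h :: "real \<Rightarrow> real \<Rightarrow> 'b::topological_space"
  assumes "continuous_on ({0..1} \<times> {0..}) (\<lambda>(y,s). h y s)" and "0 \<le> s"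
  shows "continuous_on {0..1} (\<lambda>y. h y s)"
proof -
  have "continuous_on {0..1} ((\<lambda>(y,s). h y s) \<circ> (\<lambda>y. (y,s)))"
    by (rule continuous_on_compose)
       (auto intro!: continuous_intros continuous_on_subset[OF assms(1)] simp: assms(2))
  thus ?thesis by (simp add: o_def)
qed

lemma continuous_on_Icc_norm_bounded:
  fixes h :: "real \<Rightarrow> 'b::real_normed_vector"
  assumes "continuous_on {a..b} h"
  shows "\<exists>M\<ge>0. \<forall>y\<in>{a..b}. norm (h y) \<le> M"
proof -
  have "compact (h ` {a..b})" by (rule compact_continuous_image[OF assms]) simp
  then obtain M where "\<And>w. w \<in> h ` {a..b} \<Longrightarrow> norm w \<le> M"
    using compact_imp_bounded[of "h ` {a..b}"] unfolding bounded_iff by auto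
  thus ?thesis by (intro exI[of _ "max M 0"]) force
qed

lemma bounded_near_compact:
  fixes g :: "'a::euclidean_space \<Rightarrow> 'b::real_normed_vector"
  assumes c: "continuous_on UNIV g" and K: "compact K"
  shows "\<exists>M. \<forall>k\<in>K. \<forall>z. norm (z - k) \<le> 1 \<longrightarrow> norm (g z) \<le> M"
proof -
  obtain R where R: "\<And>k. k \<in> K \<Longrightarrow> norm k \<le> R"
    using compact_imp_bounded[OF K] unfolding bounded_iff by auto
  have "compact (g ` cball 0 (R+1))"
    by (rule compact_continuous_image[OF continuous_on_subset[OF c]]) auto
  then obtain M where M: "\<And>w. w \<in> g ` cball 0 (R+1) \<Longrightarrow> norm w \<le> M"
    using compact_imp_bounded[of "g ` cball 0 (R+1)"] unfolding bounded_iff by auto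
  show ?thesis
  proof (intro exI ballI allI impI)
    fix k z assume k: "k \<in> K" and z: "norm (z - k) \<le> 1"
    have "norm z \<le> norm k + norm (z - k)" using norm_triangle_ineq[of k "z - k"] by simp
    hence "z \<in> cball 0 (R+1)" using R[OF k] z by auto
    thus "norm (g z) \<le> M" using M by auto
  qed
qed

lemma uniform_linearization_compact:
  fixes F :: "'a::euclidean_space \<Rightarrow> 'b::real_normed_vector" and F' :: "'a \<Rightarrow> 'a \<Rightarrow>\<^sub>L 'b"
  assumes dF: "\<And>z. (F has_derivative blinfun_apply (F' z)) (at z)"
    and cF': "continuous_on UNIV F'"
    and K: "compact K" and e: "e > 0"
  shows "\<exists>\<delta>>0. \<forall>k\<in>K. \<forall>z. norm (z - k) < \<delta> \<longrightarrow> norm (F z - F k - F' k (z - k)) \<le> e * norm (z - k)"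
proof -
  obtain R where R: "\<And>k. k \<in> K \<Longrightarrow> norm k \<le> R"
    using compact_imp_bounded[OF K] unfolding bounded_iff by auto
  define B where "B = cball (0::'a) (R+1)"
  have "uniformly_continuous_on B F'"
    using continuous_on_subset[OF cF'] by (simp add: compact_uniformly_continuous B_def)
  then obtain d0 where d0: "d0 > 0" and
    d0': "\<And>p q. p \<in> B \<Longrightarrow> q \<in> B \<Longrightarrow> dist q p < d0 \<Longrightarrow> dist (F' q) (F' p) < e"
    unfolding uniformly_continuous_on_def using e by metis
  show ?thesis
  proof (intro exI[of _ "min d0 1"] conjI ballI allI impI)
    show "0 < min d0 1" using d0 by auto
    fix k z assume k: "k \<in> K" and z: "norm (z - k) < min d0 1"
    define S where "S = ball k (min d0 1)"
    have SB: "w \<in> B" if "w \<in> S" for w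
    proof -
      have "norm w \<le> norm k + norm (w - k)" using norm_triangle_ineq[of k "w - k"] by simp
      moreover have "norm (w - k) < 1" using that by (auto simp: S_def dist_norm norm_minus_commute)
      ultimately show ?thesis using R[OF k] by (auto simp: B_def)
    qed
    have kB: "k \<in> B" using SB[of k] d0 by (auto simp: S_def)
    have der: "((\<lambda>w. F w - F' k w) has_derivative blinfun_apply (F' w - F' k)) (at w within S)" for w
    proof -
      have "(blinfun_apply (F' k) has_derivative blinfun_apply (F' k)) (at w within S)"
        by (rule bounded_linear_imp_has_derivative) (rule blinfun.bounded_linear_right)
      from has_derivative_diff[OF has_derivative_at_withinI[OF dF] this]
      show ?thesis by (simp add: blinfun.diff_left fun_diff_def minus_blinfun.rep_eq)
    qed
    have bnd: "onorm (blinfun_apply (F' w - F' k)) \<le> e" if "w \<in> S" for w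
    proof -
      have "dist w k < d0" using that by (auto simp: S_def dist_commute)
      hence "dist (F' w) (F' k) < e" using d0'[OF kB SB[OF that]] by blast
      thus ?thesis by (simp add: dist_norm norm_blinfun.rep_eq[symmetric])
    qed
    have zS: "z \<in> S" "k \<in> S" using z d0 by (auto simp: S_def dist_norm norm_minus_commute)
    have "norm ((F z - F' k z) - (F k - F' k k)) \<le> e * norm (z - k)"
      by (rule differentiable_bound[OF _ der bnd zS]) (simp add: S_def)
    thus "norm (F z - F k - F' k (z - k)) \<le> e * norm (z - k)"
      by (simp add: blinfun.diff_right algebra_simps)
  qed
qed

lemma uniform_partial_derivative_remainder:
  fixes \<phi> \<phi>t :: "real \<Rightarrow> real \<Rightarrow> real"
  assumes d: "\<And>y s. y \<in> {0..1} \<Longrightarrow> 0 \<le> s \<Longrightarrow>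
                ((\<lambda>s. \<phi> y s) has_real_derivative \<phi>t y s) (at s within {0..})"
    and c: "continuous_on ({0..1} \<times> {0..}) (\<lambda>(y,s). \<phi>t y s)"
    and t0: "0 \<le> t0" and e: "e > 0"
  shows "\<exists>\<delta>>0. \<forall>t\<ge>0. \<bar>t - t0\<bar> < \<delta> \<longrightarrow>
           (\<forall>y\<in>{0..1}. \<bar>\<phi> y t - \<phi> y t0 - (t - t0) * \<phi>t y t0\<bar> \<le> e * \<bar>t - t0\<bar>)"
proof -
  define C where "C = {0..1::real} \<times> {0..t0+1}"
  have "compact C" unfolding C_def by (intro compact_Times compact_Icc)
  moreover have "continuous_on C (\<lambda>(y,s). \<phi>t y s)"
    by (rule continuous_on_subset[OF c]) (auto simp: C_def)
  ultimately have "uniformly_continuous_on C (\<lambda>(y,s). \<phi>t y s)"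
    by (simp add: compact_uniformly_continuous)
  then obtain d0 where d0: "d0 > 0" and
    d0': "\<And>p q. p \<in> C \<Longrightarrow> q \<in> C \<Longrightarrow> dist q p < d0 \<Longrightarrow>
             dist ((\<lambda>(y,s). \<phi>t y s) q) ((\<lambda>(y,s). \<phi>t y s) p) < e"
    unfolding uniformly_continuous_on_def using e by metis
  show ?thesis
  proof (intro exI[of _ "min d0 1"] conjI allI impI ballI)
    show "0 < min d0 1" using d0 by auto
    fix t y :: real assume t: "0 \<le> t" and tt: "\<bar>t - t0\<bar> < min d0 1" and y: "y \<in> {0..1}"
    define S where "S = closed_segment t0 t"
    have SC: "s \<in> {0..t0+1}" if "s \<in> S" for s
      using that t t0 tt by (auto simp: S_def closed_segment_eq_real_ivl split: if_splits)
    have Sd: "\<bar>s - t0\<bar> \<le> \<bar>t - t0\<bar>" if "s \<in> S" for s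
      using that by (auto simp: S_def closed_segment_eq_real_ivl split: if_splits)
    have der: "((\<lambda>s. \<phi> y s - s * \<phi>t y t0) has_derivative (*) (\<phi>t y s - \<phi>t y t0)) (at s within S)"
      if "s \<in> S" for s
    proof -
      have "((\<lambda>s. \<phi> y s) has_real_derivative \<phi>t y s) (at s within S)"
        using SC[OF that] SC by (intro DERIV_subset[OF d[OF y]]) force+
      hence "((\<lambda>s. \<phi> y s - s * \<phi>t y t0) has_real_derivative (\<phi>t y s - \<phi>t y t0)) (at s within S)"
        by (auto intro!: derivative_eq_intros)
      thus ?thesis by (simp add: has_field_derivative_def)
    qed
    have bnd: "onorm ((*) (\<phi>t y s - \<phi>t y t0)) \<le> e" if "s \<in> S" for s
    proof (rule onorm_le)
      fix h :: real
      have "dist ((\<lambda>(y,s). \<phi>t y s) (y,s)) ((\<lambda>(y,s). \<phi>t y s) (y,t0)) < e"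
        using d0'[of "(y,t0)" "(y,s)"] SC[OF that] y t0 Sd[OF that] tt
        by (auto simp: C_def dist_Pair_Pair dist_real_def)
      hence "\<bar>\<phi>t y s - \<phi>t y t0\<bar> \<le> e" by (simp add: dist_real_def)
      thus "norm ((\<phi>t y s - \<phi>t y t0) * h) \<le> e * norm h"
        by (simp add: abs_mult mult_right_mono)
    qed
    have "norm ((\<phi> y t - t * \<phi>t y t0) - (\<phi> y t0 - t0 * \<phi>t y t0)) \<le> e * norm (t - t0)"
      by (rule differentiable_bound[OF _ der bnd]) (auto simp: S_def)
    thus "\<bar>\<phi> y t - \<phi> y t0 - (t - t0) * \<phi>t y t0\<bar> \<le> e * \<bar>t - t0\<bar>"
      by (simp add: algebra_simps)
  qed
qed

lemma gronwall_integral_Icc: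
  fixes \<phi> :: "real \<Rightarrow> real"
  assumes b: "0 \<le> b" "b \<le> 1" and L: "0 \<le> L" and a: "0 \<le> a"
    and cont: "continuous_on {0..b} \<phi>"
    and le: "\<And>y. y \<in> {0..b} \<Longrightarrow> \<phi> y \<le> a + L * integral {0..y} \<phi>"
    and y: "y \<in> {0..b}"
  shows "\<phi> y \<le> a * (1 + L * exp L)"
proof -
  define I where "I y = integral {0..y} \<phi>" for y
  have dI: "(I has_real_derivative \<phi> x) (at x within {0..b})" if "x \<in> {0..b}" for x
    unfolding I_def by (rule integral_has_real_derivative[OF cont that])
  define H where "H x = exp (- L * x) * I x - a * x" for x
  have contI: "continuous_on {0..b} I"
    unfolding I_def by (rule indefinite_integral_continuous_1[OF integrable_continuous_real[OF cont]])
  have "H y \<le> H 0"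
  proof (rule DERIV_nonpos_imp_decreasing_open[of 0 y H])
    show "0 \<le> y" using y by auto
    show "continuous_on {0..y} H"
      unfolding H_def using y by (intro continuous_intros continuous_on_subset[OF contI]) auto
    fix x assume x: "0 < x" "x < y"
    have xb: "x \<in> {0..b}" using x y by auto
    have dIx: "(I has_real_derivative \<phi> x) (at x)"
      using dI[OF xb] at_within_Icc_at[of 0 x b] x y by auto
    have dH: "(H has_real_derivative (- L * exp (- L * x) * I x + exp (- L * x) * \<phi> x - a)) (at x)"
      unfolding H_def by (rule derivative_eq_intros dIx refl | simp)+
    have "\<phi> x \<le> a + L * I x" using le[OF xb] by (simp add: I_def)
    hence "exp (- L * x) * \<phi> x \<le> exp (- L * x) * (a + L * I x)" by simp
    moreover have "exp (- L * x) * a \<le> a"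
    proof -
      have "exp (- L * x) \<le> 1" using L x by simp
      thus ?thesis using a by (simp add: mult_left_le_one_le)
    qed
    ultimately have "- L * exp (- L * x) * I x + exp (- L * x) * \<phi> x - a \<le> 0"
      by (simp add: algebra_simps)
    thus "\<exists>d. (H has_real_derivative d) (at x) \<and> d \<le> 0" using dH by blast
  qed
  hence "exp (- L * y) * I y \<le> a * y" by (simp add: H_def I_def)
  hence "I y \<le> a * y * exp (L * y)"
    by (simp add: exp_minus field_simps)
  also have "\<dots> \<le> a * 1 * exp L"
    using y a L b by (intro mult_mono) (auto intro: mult_left_le_one_le mult_right_le_one_le)
  finally have "I y \<le> a * exp L" by simp
  hence "\<phi> y \<le> a + L * (a * exp L)" using le[OF y] L
    by (smt (verit) I_def mult_left_mono)
  thus ?thesis by (simp add: algebra_simps)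
qed

text \<open>Continuous induction: at the first point where \<open>\<phi>\<close> reaches \<open>r\<close> it would already have
  been \<open>\<le> r\<close> on the whole initial segment, hence \<open>< r\<close>.\<close>
lemma continuous_induction_below:
  fixes \<phi> :: "real \<Rightarrow> real"
  assumes cont: "continuous_on {0..1} \<phi>" and r0: "\<phi> 0 < r"
    and step: "\<And>b. b \<in> {0..1} \<Longrightarrow> \<forall>y\<in>{0..b}. \<phi> y \<le> r \<Longrightarrow> \<forall>y\<in>{0..b}. \<phi> y < r"
  shows "\<forall>y\<in>{0..1}. \<phi> y < r"
proof (rule ccontr)
  assume "\<not> ?thesis"
  then have ne: "S \<noteq> {}" if "S = {0..1} \<inter> \<phi> -` {r..}" for S
    using that by auto
  define S where "S = {0..1} \<inter> \<phi> -` {r..}"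
  note ne = ne[OF S_def]
  have cl: "closed S" unfolding S_def
    by (rule continuous_closed_preimage[OF cont]) auto
  have bdd: "bdd_below S" by (auto simp: S_def bdd_below_def)
  define m where "m = Inf S"
  have mS: "m \<in> S" unfolding m_def by (rule closed_contains_Inf[OF ne bdd cl])
  have below: "\<phi> y < r" if "y \<in> {0..1}" "y < m" for y
  proof (rule ccontr)
    assume "\<not> \<phi> y < r"
    hence "y \<in> S" using that by (auto simp: S_def)
    hence "m \<le> y" unfolding m_def using bdd by (rule cInf_lower)
    thus False using that by auto
  qed
  have m01: "0 \<le> m" "m \<le> 1" and rm: "r \<le> \<phi> m" using mS by (auto simp: S_def)
  have "\<forall>y\<in>{0..m}. \<phi> y \<le> r"
  proof
    fix y assume "y \<in> {0..m}"
    moreover obtain z where z: "0 \<le> z" "z \<le> m" "\<phi> z = r"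
      using IVT'[of \<phi> 0 r m] r0 rm m01 continuous_on_subset[OF cont, of "{0..m}"] by auto
    moreover have "z = m" using below[of z] z m01 by fastforce
    ultimately show "\<phi> y \<le> r" using below[of y] m01 by (cases "y = m") (auto simp: less_eq_real_def)
  qed
  hence "\<phi> m < r" using step[of m] m01 by auto
  thus False using rm by simp
qed

text \<open>Gronwall's inequality for \<open>D = r\<^sub>0 + \<integral>G\<close>, where the linear bound on \<open>G\<close> is only known
  while \<open>\<parallel>D\<parallel> \<le> \<rho>\<close>; continuous induction shows that this a priori bound is never violated.\<close>
lemma integral_equation_gronwall_bootstrap:
  fixes D G :: "real \<Rightarrow> 'a::euclidean_space"
  assumes cD: "continuous_on {0..1} D" and cG: "continuous_on {0..1} G"
    and rep: "\<And>y. y \<in> {0..1} \<Longrightarrow> D y = r0 + integral {0..y} G"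
    and r0: "norm r0 \<le> a0" and a1: "0 \<le> a1" and L: "0 \<le> L"
    and G: "\<And>w. w \<in> {0..1} \<Longrightarrow> norm (D w) \<le> \<rho> \<Longrightarrow> norm (G w) \<le> a1 + L * norm (D w)"
    and small: "(a0 + a1) * (1 + L * exp L) < \<rho>"
    and y: "y \<in> {0..1}"
  shows "norm (D y) \<le> (a0 + a1) * (1 + L * exp L)"
proof -
  have a0: "0 \<le> a0" using r0 norm_ge_zero order_trans by blast
  have gronwall: "norm (D z) \<le> (a0 + a1) * (1 + L * exp L)"
    if b: "b \<in> {0..1}" and apriori: "\<forall>w\<in>{0..b}. norm (D w) \<le> \<rho>" and z: "z \<in> {0..b}" for b z
  proof (rule gronwall_integral_Icc[where \<phi> = "\<lambda>y. norm (D y)" and b = b])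
    show "continuous_on {0..b} (\<lambda>y. norm (D y))"
      using b by (intro continuous_intros continuous_on_subset[OF cD]) auto
    fix w assume w: "w \<in> {0..b}"
    have w1: "w \<in> {0..1}" using w b by auto
    have intD: "(\<lambda>y. norm (D y)) integrable_on {0..w}"
      using w1 by (intro integrable_continuous_real continuous_intros continuous_on_subset[OF cD]) auto
    have "norm (integral {0..w} G) \<le> integral {0..w} (\<lambda>y. a1 + L * norm (D y))"
    proof (rule integral_norm_bound_integral)
      show "G integrable_on {0..w}"
        using w1 by (intro integrable_continuous_real continuous_on_subset[OF cG]) auto
      show "(\<lambda>y. a1 + L * norm (D y)) integrable_on {0..w}"
        using integrable_add[OF integrable_const_ivl integrable_cmul[OF intD]] by simp
      show "norm (G y) \<le> a1 + L * norm (D y)" if "y \<in> {0..w}" for y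
        using that w b apriori by (intro G) auto
    qed
    also have "\<dots> = integral {0..w} (\<lambda>y. a1) + integral {0..w} (\<lambda>y. L * norm (D y))"
      using integrable_cmul[OF intD, of L] by (intro integral_add) auto
    also have "\<dots> = a1 * w + L * integral {0..w} (\<lambda>y. norm (D y))"
      using w1 integral_cmul[of "{0..w}" L "\<lambda>y. norm (D y)"] by simp
    also have "\<dots> \<le> a1 + L * integral {0..w} (\<lambda>y. norm (D y))"
      using w1 a1 by (simp add: mult_left_le)
    finally have "norm (integral {0..w} G) \<le> a1 + L * integral {0..w} (\<lambda>y. norm (D y))" .
    moreover have "norm (D w) \<le> norm r0 + norm (integral {0..w} G)"
      unfolding rep[OF w1] by (rule norm_triangle_ineq)
    ultimately show "norm (D w) \<le> (a0 + a1) + L * integral {0..w} (\<lambda>y. norm (D y))"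
      using r0 by linarith
  qed (use b z L a0 a1 in auto)
  have "\<forall>w\<in>{0..1}. norm (D w) < \<rho>"
  proof (rule continuous_induction_below)
    show "continuous_on {0..1} (\<lambda>y. norm (D y))" by (intro continuous_intros cD)
    have "a0 \<le> (a0 + a1) * (1 + L * exp L)"
      using a0 a1 L by (simp add: algebra_simps)
    thus "norm (D 0) < \<rho>" using rep[of 0] r0 small by simp
    show "\<forall>w\<in>{0..b}. norm (D w) < \<rho>" if "b \<in> {0..1}" "\<forall>w\<in>{0..b}. norm (D w) \<le> \<rho>" for b
      using gronwall[OF that] small by (meson le_less_trans)
  qed
  thus ?thesis using gronwall[of 1 y] y by (simp add: less_imp_le)
qed

text \<open>The remainder of the product rule for \<open>\<gamma> F(z)\<close>, split as
  \<open>(\<gamma>\<^sub>1 - \<gamma>\<^sub>0 - h\<gamma>') F(z) + h\<gamma>' (F(z) - F(k)) + \<gamma>\<^sub>0 (F(z) - F(k) - A(z - k)) + \<gamma>\<^sub>0 A(z - k - hq)\<close>;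
  all terms but the last are \<open>O(\<eta> h)\<close>.\<close>
lemma norm_product_remainder_le:
  fixes F :: "'a::real_normed_vector \<Rightarrow> 'b::real_normed_vector" and A :: "'a \<Rightarrow>\<^sub>L 'b"
  assumes M: "0 \<le> M" and \<eta>: "0 \<le> \<eta>" "\<eta> \<le> 1"
    and \<gamma>: "\<bar>\<gamma>1 - \<gamma>0 - h * \<gamma>'\<bar> \<le> \<eta> * \<bar>h\<bar>" "\<bar>\<gamma>0\<bar> \<le> M" "\<bar>\<gamma>'\<bar> \<le> M"
    and F: "norm (F z) \<le> M" "norm A \<le> M"
    and lin: "norm (F z - F k - A (z - k)) \<le> \<eta> * norm (z - k)"
    and zk: "norm (z - k) \<le> c * \<bar>h\<bar>"
    and h: "\<bar>h\<bar> * M * (M + 1) * c \<le> \<eta>"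
  shows "norm (\<gamma>1 *\<^sub>R F z - \<gamma>0 *\<^sub>R F k - h *\<^sub>R (\<gamma>' *\<^sub>R F k + \<gamma>0 *\<^sub>R A q))
    \<le> \<eta> * \<bar>h\<bar> * (1 + M + M * c) + M * M * norm (z - k - h *\<^sub>R q)"
proof -
  have "\<gamma>1 *\<^sub>R F z - \<gamma>0 *\<^sub>R F k - h *\<^sub>R (\<gamma>' *\<^sub>R F k + \<gamma>0 *\<^sub>R A q)
      = (\<gamma>1 - \<gamma>0 - h * \<gamma>') *\<^sub>R F z + (h * \<gamma>') *\<^sub>R (F z - F k) + \<gamma>0 *\<^sub>R (F z - F k - A (z - k))
        + \<gamma>0 *\<^sub>R A (z - k - h *\<^sub>R q)"
    by (simp add: blinfun.diff_right blinfun.add_right blinfun.scaleR_right algebra_simps)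
  also have "norm \<dots> \<le> norm ((\<gamma>1 - \<gamma>0 - h * \<gamma>') *\<^sub>R F z) + norm ((h * \<gamma>') *\<^sub>R (F z - F k))
      + norm (\<gamma>0 *\<^sub>R (F z - F k - A (z - k))) + norm (\<gamma>0 *\<^sub>R A (z - k - h *\<^sub>R q))"
    by (intro norm_triangle_le add_mono order_refl)
  also have "\<dots> \<le> \<eta> * \<bar>h\<bar> * M + \<eta> * \<bar>h\<bar> + M * (\<eta> * (c * \<bar>h\<bar>)) + M * (M * norm (z - k - h *\<^sub>R q))"
  proof (intro add_mono)
    show "norm ((\<gamma>1 - \<gamma>0 - h * \<gamma>') *\<^sub>R F z) \<le> \<eta> * \<bar>h\<bar> * M"
      unfolding norm_scaleR using \<gamma>(1) F(1) \<eta> by (intro mult_mono) auto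
    have Azk: "norm (A (z - k)) \<le> M * (c * \<bar>h\<bar>)"
      using norm_blinfun[of A "z - k"] F(2) zk M by (meson mult_mono norm_ge_zero order_trans)
    have lin': "norm (F z - F k - A (z - k)) \<le> \<eta> * (c * \<bar>h\<bar>)"
      using lin mult_left_mono[OF zk \<eta>(1)] by linarith
    moreover have "\<eta> * (c * \<bar>h\<bar>) \<le> 1 * (c * \<bar>h\<bar>)"
      using \<eta> zk norm_ge_zero[of "z - k"] by (intro mult_right_mono) linarith+
    ultimately have "norm (F z - F k) \<le> (M + 1) * (c * \<bar>h\<bar>)"
      using Azk norm_triangle_ineq[of "A (z - k)" "F z - F k - A (z - k)"] by (simp add: algebra_simps)
    hence "norm ((h * \<gamma>') *\<^sub>R (F z - F k)) \<le> (\<bar>h\<bar> * M) * ((M + 1) * (c * \<bar>h\<bar>))"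
      unfolding norm_scaleR abs_mult using \<gamma>(3) by (intro mult_mono mult_left_mono) auto
    also have "\<dots> = (\<bar>h\<bar> * M * (M + 1) * c) * \<bar>h\<bar>" by (simp add: algebra_simps)
    also have "\<dots> \<le> \<eta> * \<bar>h\<bar>" using h by (intro mult_right_mono) auto
    finally show "norm ((h * \<gamma>') *\<^sub>R (F z - F k)) \<le> \<eta> * \<bar>h\<bar>" .
    show "norm (\<gamma>0 *\<^sub>R (F z - F k - A (z - k))) \<le> M * (\<eta> * (c * \<bar>h\<bar>))"
      unfolding norm_scaleR using \<gamma>(2) lin' by (intro mult_mono) auto
    have "norm (A (z - k - h *\<^sub>R q)) \<le> M * norm (z - k - h *\<^sub>R q)"
      using norm_blinfun[of A "z - k - h *\<^sub>R q"] F(2) by (meson mult_right_mono norm_ge_zero order_trans)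
    thus "norm (\<gamma>0 *\<^sub>R A (z - k - h *\<^sub>R q)) \<le> M * (M * norm (z - k - h *\<^sub>R q))"
      unfolding norm_scaleR using \<gamma>(2) by (intro mult_mono) auto
  qed
  also have "\<dots> = \<eta> * \<bar>h\<bar> * (1 + M + M * c) + M * M * norm (z - k - h *\<^sub>R q)"
    by (simp add: algebra_simps)
  finally show ?thesis .
qed

lemma integral_equation_has_vector_derivative:
  fixes \<Gamma> \<Gamma>t U Ut :: "real \<Rightarrow> real \<Rightarrow> real"
    and F :: "'a::euclidean_space \<times> real \<Rightarrow> 'a" and F' :: "'a \<times> real \<Rightarrow> ('a \<times> real) \<Rightarrow>\<^sub>L 'a"
    and P :: "real \<Rightarrow> real \<Rightarrow> 'a" and X :: "real \<Rightarrow> 'a" and Xd :: 'a and Q :: "real \<Rightarrow> 'a"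
  assumes t0: "0 \<le> t0"
    and d\<Gamma>: "\<And>y s. y \<in> {0..1} \<Longrightarrow> 0 \<le> s \<Longrightarrow> ((\<lambda>s. \<Gamma> y s) has_real_derivative \<Gamma>t y s) (at s within {0..})"
    and c\<Gamma>: "continuous_on ({0..1} \<times> {0..}) (\<lambda>(y,s). \<Gamma> y s)"
    and c\<Gamma>t: "continuous_on ({0..1} \<times> {0..}) (\<lambda>(y,s). \<Gamma>t y s)"
    and dU: "\<And>y s. y \<in> {0..1} \<Longrightarrow> 0 \<le> s \<Longrightarrow> ((\<lambda>s. U y s) has_real_derivative Ut y s) (at s within {0..})"
    and cU: "continuous_on ({0..1} \<times> {0..}) (\<lambda>(y,s). U y s)"
    and cUt: "continuous_on ({0..1} \<times> {0..}) (\<lambda>(y,s). Ut y s)"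
    and dF: "\<And>z. (F has_derivative blinfun_apply (F' z)) (at z)"
    and cF': "continuous_on UNIV F'"
    and cP: "\<And>s. 0 \<le> s \<Longrightarrow> continuous_on {0..1} (\<lambda>y. P y s)"
    and eqP: "\<And>y s. y \<in> {0..1} \<Longrightarrow> 0 \<le> s \<Longrightarrow>
       P y s = X s + integral {0..y} (\<lambda>w. \<Gamma> w s *\<^sub>R F (P w s, U w s))"
    and dX: "(X has_vector_derivative Xd) (at t0 within {0..})"
    and cQ: "continuous_on {0..1} Q"
    and eqQ: "\<And>y. y \<in> {0..1} \<Longrightarrow> Q y = Xd + integral {0..y}
       (\<lambda>w. \<Gamma>t w t0 *\<^sub>R F (P w t0, U w t0) + \<Gamma> w t0 *\<^sub>R F' (P w t0, U w t0) (Q w, Ut w t0))"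
    and y: "y \<in> {0..1}"
  shows "((\<lambda>s. P y s) has_vector_derivative Q y) (at t0 within {0..})"
  unfolding has_vector_derivative_def has_derivative_within_alt
proof (intro conjI allI impI bounded_linear_scaleR_left)
  fix e :: real assume e: "e > 0"
  have cF: "continuous_on UNIV F"
    using dF by (meson continuous_at_imp_continuous_on has_derivative_continuous)
  define g where "g s w = \<Gamma> w s *\<^sub>R F (P w s, U w s)" for s w
  define R where "R w = \<Gamma>t w t0 *\<^sub>R F (P w t0, U w t0) + \<Gamma> w t0 *\<^sub>R F' (P w t0, U w t0) (Q w, Ut w t0)" for w
  have cg: "continuous_on {0..1} (g s)" if "0 \<le> s" for s
    unfolding g_def using that
    by (intro continuous_intros continuous_on_slice[OF c\<Gamma>] continuous_on_compose2[OF cF] cP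
          continuous_on_slice[OF cU]) auto
  have cR: "continuous_on {0..1} R"
    unfolding R_def[abs_def] using t0
    by (intro continuous_intros continuous_on_slice[OF c\<Gamma>] continuous_on_slice[OF c\<Gamma>t]
        continuous_on_compose2[OF cF] continuous_on_compose2[OF cF'] cP continuous_on_slice[OF cU]
        continuous_on_slice[OF cUt] cQ) auto
  define K where "K = (\<lambda>w. (P w t0, U w t0)) ` {0..1}"
  have "compact K" unfolding K_def using t0
    by (intro compact_continuous_image continuous_intros cP continuous_on_slice[OF cU]) auto
  have kK: "(P w t0, U w t0) \<in> K" if "w \<in> {0..1}" for w using that by (auto simp: K_def)
  obtain M where M0: "0 \<le> M"
    and MF: "\<And>k z. k \<in> K \<Longrightarrow> norm (z - k) \<le> 1 \<Longrightarrow> norm (F z) \<le> M"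
    and MF': "\<And>k. k \<in> K \<Longrightarrow> norm (F' k) \<le> M"
    and M\<Gamma>: "\<And>w. w \<in> {0..1} \<Longrightarrow> \<bar>\<Gamma> w t0\<bar> \<le> M"
    and M\<Gamma>t: "\<And>w. w \<in> {0..1} \<Longrightarrow> \<bar>\<Gamma>t w t0\<bar> \<le> M"
    and MQ: "\<And>w. w \<in> {0..1} \<Longrightarrow> norm (Q w) \<le> M"
    and MUt: "\<And>w. w \<in> {0..1} \<Longrightarrow> \<bar>Ut w t0\<bar> \<le> M"
  proof -
    obtain M1 where M1: "\<And>k z. k \<in> K \<Longrightarrow> norm (z - k) \<le> 1 \<Longrightarrow> norm (F z) \<le> M1"
      using bounded_near_compact[OF cF \<open>compact K\<close>] by blast
    obtain M2 where M2: "\<And>k z. k \<in> K \<Longrightarrow> norm (z - k) \<le> 1 \<Longrightarrow> norm (F' z) \<le> M2"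
      using bounded_near_compact[OF cF' \<open>compact K\<close>] by blast
    obtain M3 where M3: "\<And>w. w \<in> {0..1} \<Longrightarrow> norm (\<Gamma> w t0) \<le> M3"
      using continuous_on_Icc_norm_bounded[OF continuous_on_slice[OF c\<Gamma> t0]] by blast
    obtain M4 where M4: "\<And>w. w \<in> {0..1} \<Longrightarrow> norm (\<Gamma>t w t0) \<le> M4"
      using continuous_on_Icc_norm_bounded[OF continuous_on_slice[OF c\<Gamma>t t0]] by blast
    obtain M5 where M5: "\<And>w. w \<in> {0..1} \<Longrightarrow> norm (Q w) \<le> M5"
      using continuous_on_Icc_norm_bounded[OF cQ] by blast
    obtain M6 where M6: "\<And>w. w \<in> {0..1} \<Longrightarrow> norm (Ut w t0) \<le> M6"
      using continuous_on_Icc_norm_bounded[OF continuous_on_slice[OF cUt t0]] by blast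
    define M where "M = max 0 (max (max M1 M2) (max (max M3 M4) (max M5 M6)))"
    have M: "M1 \<le> M" "M2 \<le> M" "M3 \<le> M" "M4 \<le> M" "M5 \<le> M" "M6 \<le> M" "0 \<le> M"
      by (simp_all add: M_def le_max_iff_disj)
    show thesis
    proof (rule that[OF M(7)])
      show "norm (F z) \<le> M" if "k \<in> K" "norm (z - k) \<le> 1" for k z
        using M1[OF that] M(1) by linarith
      show "norm (F' k) \<le> M" if "k \<in> K" for k
        using M2[OF that, of k] M(2) by simp
      show "\<bar>\<Gamma> w t0\<bar> \<le> M" if "w \<in> {0..1}" for w using M3[OF that] M(3) by simp
      show "\<bar>\<Gamma>t w t0\<bar> \<le> M" if "w \<in> {0..1}" for w using M4[OF that] M(4) by simp
      show "norm (Q w) \<le> M" if "w \<in> {0..1}" for w using M5[OF that] M(5) by simp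
      show "\<bar>Ut w t0\<bar> \<le> M" if "w \<in> {0..1}" for w using M6[OF that] M(6) by simp
    qed
  qed
  define c where "c = 2 + 2 * M"
  define L where "L = M * M"
  define A where "A = 2 + M + M * c + M * M"
  define C where "C = A * (1 + L * exp L)"
  have c2: "2 \<le> c" and L0: "0 \<le> L" and A2: "2 \<le> A" using M0 by (simp_all add: c_def L_def A_def)
  have C2: "2 \<le> C"
  proof -
    have "A * 1 \<le> A * (1 + L * exp L)" using A2 L0 by (intro mult_left_mono) auto
    thus ?thesis using A2 unfolding C_def by linarith
  qed
  define \<eta> where "\<eta> = min e 1 / (2 * C)"
  have \<eta>0: "0 < \<eta>" and \<eta>C: "\<eta> * C \<le> min e 1 / 2" using e C2 by (simp_all add: \<eta>_def)
  have \<eta>1: "\<eta> \<le> 1"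
  proof -
    have "\<eta> \<le> 1 / (2 * C)" unfolding \<eta>_def using C2 by (intro divide_right_mono) auto
    also have "\<dots> \<le> 1" using C2 by simp
    finally show ?thesis .
  qed
  obtain d1 where d1: "d1 > 0" and d1': "\<And>t w. 0 \<le> t \<Longrightarrow> \<bar>t - t0\<bar> < d1 \<Longrightarrow> w \<in> {0..1} \<Longrightarrow>
      \<bar>\<Gamma> w t - \<Gamma> w t0 - (t - t0) * \<Gamma>t w t0\<bar> \<le> \<eta> * \<bar>t - t0\<bar>"
    using uniform_partial_derivative_remainder[OF d\<Gamma> c\<Gamma>t t0 \<eta>0] by blast
  obtain d2 where d2: "d2 > 0" and d2': "\<And>t w. 0 \<le> t \<Longrightarrow> \<bar>t - t0\<bar> < d2 \<Longrightarrow> w \<in> {0..1} \<Longrightarrow>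
      \<bar>U w t - U w t0 - (t - t0) * Ut w t0\<bar> \<le> \<eta> * \<bar>t - t0\<bar>"
    using uniform_partial_derivative_remainder[OF dU cUt t0 \<eta>0] by blast
  obtain d3 where d3: "d3 > 0" and d3': "\<And>t. 0 \<le> t \<Longrightarrow> \<bar>t - t0\<bar> < d3 \<Longrightarrow>
      norm (X t - X t0 - (t - t0) *\<^sub>R Xd) \<le> \<eta> * \<bar>t - t0\<bar>"
    using dX \<eta>0 unfolding has_vector_derivative_def has_derivative_within_alt by force
  obtain dL where dL: "dL > 0" and dL': "\<And>k z. k \<in> K \<Longrightarrow> norm (z - k) < dL \<Longrightarrow>
      norm (F z - F k - F' k (z - k)) \<le> \<eta> * norm (z - k)"
    using uniform_linearization_compact[OF dF cF' \<open>compact K\<close> \<eta>0] by blast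
  define d4 where "d4 = \<eta> / (M * (M + 1) * c + 1)"
  define d5 where "d5 = min dL 1 / c"
  have M4c: "0 \<le> M * (M + 1) * c" using M0 c2 by simp
  hence d4: "d4 > 0" using \<eta>0 unfolding d4_def by (intro divide_pos_pos) auto
  have d5: "d5 > 0" using dL c2 by (simp add: d5_def)
  show "\<exists>d>0. \<forall>t\<in>{0..}. norm (t - t0) < d \<longrightarrow>
          norm (P y t - P y t0 - (t - t0) *\<^sub>R Q y) \<le> e * norm (t - t0)"
  proof (intro exI[of _ "min (min d1 d2) (min d3 (min d4 d5))"] conjI ballI impI)
    show "0 < min (min d1 d2) (min d3 (min d4 d5))" using d1 d2 d3 d4 d5 by auto
    fix t :: real assume t: "t \<in> {0..}" and tt: "norm (t - t0) < min (min d1 d2) (min d3 (min d4 d5))"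
    define h where "h = t - t0"
    define D where "D w = P w t - P w t0 - h *\<^sub>R Q w" for w
    define G where "G w = g t w - g t0 w - h *\<^sub>R R w" for w
    have t: "0 \<le> t" and hd: "\<bar>h\<bar> < d1" "\<bar>h\<bar> < d2" "\<bar>h\<bar> < d3" "\<bar>h\<bar> < d4" "\<bar>h\<bar> < d5"
      using t tt by (auto simp: h_def)
    have intg: "g s integrable_on {0..w}" if "0 \<le> s" "w \<in> {0..1}" for s w
      using that by (intro integrable_continuous_real continuous_on_subset[OF cg]) auto
    have intR: "R integrable_on {0..w}" if "w \<in> {0..1}" for w
      using that by (intro integrable_continuous_real continuous_on_subset[OF cR]) auto
    have Drep: "D w = (X t - X t0 - h *\<^sub>R Xd) + integral {0..w} G" if w: "w \<in> {0..1}" for w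
    proof -
      have ints: "g t integrable_on {0..w}" "g t0 integrable_on {0..w}"
          "(\<lambda>w. h *\<^sub>R R w) integrable_on {0..w}"
        using intg[OF t w] intg[OF t0 w] integrable_cmul[OF intR[OF w]] by auto
      have "integral {0..w} G = integral {0..w} (\<lambda>w. g t w - g t0 w) - integral {0..w} (\<lambda>w. h *\<^sub>R R w)"
        unfolding G_def by (rule integral_diff) (use ints in \<open>auto intro: integrable_diff\<close>)
      also have "integral {0..w} (\<lambda>w. g t w - g t0 w) = integral {0..w} (g t) - integral {0..w} (g t0)"
        by (rule integral_diff) (use ints in auto)
      finally have "integral {0..w} G = integral {0..w} (g t) - integral {0..w} (g t0) - h *\<^sub>R integral {0..w} R"
        by simp
      thus ?thesis using eqP[OF w t] eqP[OF w t0] eqQ[OF w]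
        unfolding D_def g_def[abs_def] R_def[abs_def] by (simp add: algebra_simps)
    qed
    have G_le: "norm (G w) \<le> \<eta> * \<bar>h\<bar> * (A - 1) + L * norm (D w)"
      if w: "w \<in> {0..1}" and Dw: "norm (D w) \<le> \<bar>h\<bar>" for w
    proof -
      define k where "k = (P w t0, U w t0)"
      define z where "z = (P w t, U w t)"
      define q where "q = (Q w, Ut w t0)"
      have k: "k \<in> K" using kK[OF w] by (simp add: k_def)
      have "norm (z - k - h *\<^sub>R q) \<le> norm (D w) + \<bar>U w t - U w t0 - h * Ut w t0\<bar>"
        using norm_Pair_le[of "D w" "U w t - U w t0 - h * Ut w t0"]
        by (simp add: z_def k_def q_def D_def algebra_simps)
      hence rem: "norm (z - k - h *\<^sub>R q) \<le> norm (D w) + \<eta> * \<bar>h\<bar>"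
        using d2'[OF t _ w] hd by (simp add: h_def)
      have "norm q \<le> 2 * M"
        using norm_Pair_le[of "Q w" "Ut w t0"] MQ[OF w] MUt[OF w] by (simp add: q_def)
      hence "norm (h *\<^sub>R q) \<le> \<bar>h\<bar> * (2 * M)" by (simp add: mult_left_mono)
      moreover have "\<eta> * \<bar>h\<bar> \<le> \<bar>h\<bar>" using \<eta>0 \<eta>1 by (intro mult_left_le_one_le) auto
      ultimately have zk: "norm (z - k) \<le> c * \<bar>h\<bar>"
        using rem Dw norm_triangle_ineq[of "z - k - h *\<^sub>R q" "h *\<^sub>R q"] by (simp add: c_def algebra_simps)
      have "c * \<bar>h\<bar> < c * d5" using hd c2 by simp
      hence zk1: "norm (z - k) < min dL 1" using zk c2 by (simp add: d5_def)
      have "\<bar>h\<bar> * M * (M + 1) * c = \<bar>h\<bar> * (M * (M + 1) * c)" by simp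
      also have "\<dots> \<le> d4 * (M * (M + 1) * c)" using hd(4) M4c by (intro mult_right_mono) auto
      also have "\<dots> \<le> d4 * (M * (M + 1) * c + 1)" using d4 by simp
      also have "\<dots> = \<eta>" using M4c by (simp add: d4_def)
      finally have hsmall: "\<bar>h\<bar> * M * (M + 1) * c \<le> \<eta>" .
      have "G w = \<Gamma> w t *\<^sub>R F z - \<Gamma> w t0 *\<^sub>R F k - h *\<^sub>R (\<Gamma>t w t0 *\<^sub>R F k + \<Gamma> w t0 *\<^sub>R F' k q)"
        by (simp add: G_def g_def R_def z_def k_def q_def)
      also have "norm \<dots> \<le> \<eta> * \<bar>h\<bar> * (1 + M + M * c) + M * M * norm (z - k - h *\<^sub>R q)"
        using d1'[OF t _ w] hd
        by (intro norm_product_remainder_le M0 \<eta>1 M\<Gamma>[OF w] M\<Gamma>t[OF w] MF[OF k] MF'[OF k] zk hsmall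
            dL'[OF k]) (use zk1 \<eta>0 in \<open>auto simp: h_def\<close>)
      also have "\<dots> \<le> \<eta> * \<bar>h\<bar> * (1 + M + M * c) + L * (norm (D w) + \<eta> * \<bar>h\<bar>)"
        using rem M0 by (simp add: L_def mult_left_mono)
      also have "\<dots> = \<eta> * \<bar>h\<bar> * (A - 1) + L * norm (D w)"
        by (simp add: A_def L_def algebra_simps)
      finally show ?thesis .
    qed
    have "norm (D y) \<le> e * \<bar>h\<bar>"
    proof (cases "h = 0")
      case True
      thus ?thesis by (simp add: D_def h_def)
    next
      case False
      have split: "(\<eta> * \<bar>h\<bar> + \<eta> * \<bar>h\<bar> * (A - 1)) * (1 + L * exp L) = \<eta> * C * \<bar>h\<bar>"
        by (simp add: C_def algebra_simps)
      have "norm (D y) \<le> (\<eta> * \<bar>h\<bar> + \<eta> * \<bar>h\<bar> * (A - 1)) * (1 + L * exp L)"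
      proof (rule integral_equation_gronwall_bootstrap[where G = G and \<rho> = "\<bar>h\<bar>"])
        show "continuous_on {0..1} D"
          unfolding D_def[abs_def] by (intro continuous_intros cP t t0 cQ)
        show "continuous_on {0..1} G"
          unfolding G_def[abs_def] by (intro continuous_intros cg t t0 cR)
        show "norm (X t - X t0 - h *\<^sub>R Xd) \<le> \<eta> * \<bar>h\<bar>"
          using d3'[OF t] hd by (simp add: h_def)
        show "0 \<le> \<eta> * \<bar>h\<bar> * (A - 1)" using \<eta>0 A2 by simp
        show "(\<eta> * \<bar>h\<bar> + \<eta> * \<bar>h\<bar> * (A - 1)) * (1 + L * exp L) < \<bar>h\<bar>"
          unfolding split using \<eta>C False by simp
      qed (use Drep G_le L0 y in auto)
      also have "\<dots> = \<eta> * C * \<bar>h\<bar>" by (simp add: C_def algebra_simps)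
      also have "\<dots> \<le> e * \<bar>h\<bar>" using \<eta>C e by (intro mult_right_mono) auto
      finally show ?thesis .
    qed
    thus "norm (P y t - P y t0 - (t - t0) *\<^sub>R Q y) \<le> e * norm (t - t0)"
      by (simp add: D_def h_def)
  qed
qed

lemma at_within_atLeast_neq_bot:
  fixes t :: real
  assumes "a \<le> t"
  shows "at t within {a..} \<noteq> bot"
proof -
  have "at t within {t..t+1} \<noteq> bot"
    using islimpt_Icc[of t "t+1" t] trivial_limit_within[of t "{t..t+1}"] by auto
  moreover have "at t within {t..t+1} \<le> at t within {a..}" using assms by (intro at_le) auto
  ultimately show ?thesis by (auto simp: bot_unique)
qed

text \<open>Differentiating \<open>u(w,s) - u(0,s) = \<integral>\<^sub>0\<^sup>w u\<^sub>x(z,s) dz\<close> in \<open>s\<close> under the integral sign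
  gives \<open>u\<^sub>t(w,t) - u\<^sub>t(0,t) = \<integral>\<^sub>0\<^sup>w u\<^sub>x\<^sub>t(z,t) dz\<close>.\<close>
lemma mixed_partial_has_real_derivative:
  fixes u ux ut uxt :: "real \<Rightarrow> real \<Rightarrow> real"
  assumes u_x: "\<And>x t. x \<in> {0..1} \<Longrightarrow> t \<ge> 0 \<Longrightarrow>
                ((\<lambda>y. u y t) has_real_derivative ux x t) (at x within {0..1})"
    and u_t: "\<And>x t. x \<in> {0..1} \<Longrightarrow> t \<ge> 0 \<Longrightarrow>
                ((\<lambda>s. u x s) has_real_derivative ut x t) (at t within {0..})"
    and u_xt: "\<And>x t. x \<in> {0..1} \<Longrightarrow> t \<ge> 0 \<Longrightarrow>
                ((\<lambda>s. ux x s) has_real_derivative uxt x t) (at t within {0..})"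
    and ux_cont: "continuous_on ({0..1} \<times> {0..}) (\<lambda>(x,t). ux x t)"
    and uxt_cont: "continuous_on ({0..1} \<times> {0..}) (\<lambda>(x,t). uxt x t)"
    and y: "y \<in> {0..1}" and t: "0 \<le> t"
  shows "((\<lambda>w. ut w t) has_real_derivative uxt y t) (at y within {0..1})"
proof -
  have ut_eq: "ut w t = ut 0 t + integral {0..w} (\<lambda>z. uxt z t)" if w: "w \<in> {0..1}" for w
  proof -
    have ftc: "u w s - u 0 s = integral {0..w} (\<lambda>z. ux z s)" if s: "0 \<le> s" for s
    proof -
      have "((\<lambda>z. ux z s) has_integral (u w s - u 0 s)) {0..w}"
      proof (rule fundamental_theorem_of_calculus)
        show "0 \<le> w" using w by auto
        fix z assume z: "z \<in> {0..w}"
        have "((\<lambda>y. u y s) has_real_derivative ux z s) (at z within {0..w})"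
          by (rule DERIV_subset[OF u_x]) (use z w s in auto)
        thus "((\<lambda>y. u y s) has_vector_derivative ux z s) (at z within {0..w})"
          by (simp add: has_real_derivative_iff_has_vector_derivative)
      qed
      thus ?thesis by (simp add: integral_unique)
    qed
    have "((\<lambda>s. integral (cbox 0 w) (\<lambda>z. ux z s)) has_field_derivative
            integral (cbox 0 w) (\<lambda>z. uxt z t)) (at t within {0..})"
    proof (rule leibniz_rule_field_derivative[where fx = "\<lambda>s z. uxt z s"])
      fix s z assume "s \<in> {0::real..}" "z \<in> cbox 0 w"
      thus "((\<lambda>s. ux z s) has_field_derivative uxt z s) (at s within {0..})"
        using w by (intro u_xt) auto
    next
      fix s :: real assume s: "s \<in> {0..}"
      show "(\<lambda>z. ux z s) integrable_on cbox 0 w"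
        using w s by (intro integrable_continuous continuous_on_subset[OF continuous_on_slice[OF ux_cont]]) auto
    next
      have "continuous_on ({0..} \<times> cbox 0 w) ((\<lambda>(x,t). uxt x t) \<circ> (\<lambda>(s,z). (z,s)))"
      proof (rule continuous_on_compose)
        show "continuous_on ({0..} \<times> cbox 0 w) (\<lambda>(s, z). (z, s))"
          unfolding case_prod_beta by (intro continuous_intros)
        show "continuous_on ((\<lambda>(s, z). (z, s)) ` ({0..} \<times> cbox 0 w)) (\<lambda>(x, t). uxt x t)"
          by (rule continuous_on_subset[OF uxt_cont]) (use w in auto)
      qed
      thus "continuous_on ({0..} \<times> cbox 0 w) (\<lambda>(s, z). uxt z s)"
        by (simp add: o_def case_prod_beta)
    qed (use t in auto)
    hence "((\<lambda>s. integral {0..w} (\<lambda>z. ux z s)) has_field_derivative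
            integral {0..w} (\<lambda>z. uxt z t)) (at t within {0..})"
      by simp
    hence int_der: "((\<lambda>s. u w s - u 0 s) has_field_derivative integral {0..w} (\<lambda>z. uxt z t)) (at t within {0..})"
      by (rule has_field_derivative_transform_within[OF _ zero_less_one]) (use t in \<open>auto simp: ftc\<close>)
    have ut_der: "((\<lambda>s. u w s - u 0 s) has_field_derivative ut w t - ut 0 t) (at t within {0..})"
      using w t by (intro derivative_intros u_t) auto
    have "ut w t - ut 0 t = integral {0..w} (\<lambda>z. uxt z t)"
      by (rule has_field_derivative_unique[OF ut_der int_der at_within_atLeast_neq_bot[OF t]])
    thus ?thesis by simp
  qed
  have "((\<lambda>w. ut 0 t + integral {0..w} (\<lambda>z. uxt z t)) has_real_derivative uxt y t) (at y within {0..1})"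
    using integral_has_real_derivative[OF continuous_on_slice[OF uxt_cont t] y]
    by (auto intro!: derivative_eq_intros)
  thus ?thesis
    by (rule has_field_derivative_transform_within[OF _ zero_less_one]) (use y in \<open>auto simp: ut_eq[symmetric]\<close>)
qed

lemma Gam_has_real_derivative:
  assumes v1: "\<And>a. (v has_real_derivative deriv v a) (at a)"
    and v2: "\<And>a. (deriv v has_real_derivative deriv (deriv v) a) (at a)"
    and vne: "v (a z) \<noteq> 0"
    and a: "(a has_real_derivative da) (at z within S)"
    and b: "(b has_real_derivative db) (at z within S)"
    and c: "(c has_real_derivative dc) (at z within S)"
  shows "((\<lambda>z. Gam v (a z) (b z) (c z)) has_real_derivative
     - deriv v (a z) * da / v (a z)^2
     - (dc * deriv v (a z) * b z + c z * (deriv (deriv v) (a z) * da * b z + deriv v (a z) * db)) / v (a z)^2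
     + 2 * c z * deriv v (a z) * b z * deriv v (a z) * da / v (a z)^3) (at z within S)"
proof -
  note d1 = DERIV_chain2[OF v1 a]
  note d2 = DERIV_chain2[OF v2 a]
  show ?thesis unfolding Gam_def
    by (rule derivative_eq_intros d1 d2 a b c refl | simp add: vne)+
       (simp add: field_simps vne eval_nat_numeral)
qed

lemma integral_equation_derivative_Icc:
  fixes p :: "real \<Rightarrow> 'a::euclidean_space"
  assumes int: "\<And>y. y \<in> {0..1} \<Longrightarrow> ((\<lambda>w. H w (p w)) has_integral (p y - c)) {0..y}"
    and cH: "\<And>q. continuous_on {0..1} q \<Longrightarrow> continuous_on {0..1} (\<lambda>w. H w (q w))"
  shows "continuous_on {0..1} p"
    and "\<And>y. y \<in> {0..1} \<Longrightarrow> (p has_vector_derivative H y (p y)) (at y within {0..1})"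
proof -
  have p_eq: "p y = c + integral {0..y} (\<lambda>w. H w (p w))" if "y \<in> {0..1}" for y
    using integral_unique[OF int[OF that]] by simp
  have "continuous_on {0..1} (\<lambda>y. c + integral {0..y} (\<lambda>w. H w (p w)))"
    using int[of 1] by (intro continuous_intros indefinite_integral_continuous_1) auto
  thus cp: "continuous_on {0..1} p" by (rule continuous_on_eq) (use p_eq in auto)
  fix y :: real assume y: "y \<in> {0..1}"
  have "((\<lambda>y. c + integral {0..y} (\<lambda>w. H w (p w))) has_vector_derivative H y (p y)) (at y within {0..1})"
    using integral_has_vector_derivative[OF cH[OF cp] y] by (auto intro!: derivative_eq_intros)
  thus "(p has_vector_derivative H y (p y)) (at y within {0..1})"
    by (rule has_vector_derivative_transform_within[OF _ zero_less_one]) (use y p_eq in auto)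
qed

locale predictor_transport =
  fixes f :: "'a::euclidean_space \<Rightarrow> real \<Rightarrow> 'a"
    and f' :: "'a \<times> real \<Rightarrow> ('a \<times> real) \<Rightarrow>\<^sub>L 'a"
    and v :: "real \<Rightarrow> real"
    and X :: "real \<Rightarrow> 'a"
    and u ux ut uxx uxt :: "real \<Rightarrow> real \<Rightarrow> real"
    and p :: "real \<Rightarrow> real \<Rightarrow> 'a"
  assumes f_C1: "\<And>z. ((\<lambda>z. f (fst z) (snd z)) has_derivative blinfun_apply (f' z)) (at z)"
    and f'_cont: "continuous_on UNIV f'"
    and v_d1: "\<And>a. (v has_real_derivative deriv v a) (at a)"
    and v_d2: "\<And>a. (deriv v has_real_derivative deriv (deriv v) a) (at a)"
    and v_d2_cont: "continuous_on UNIV (deriv (deriv v))"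
    and v_pos: "\<And>a. 0 < v a"
    and u_x: "\<And>x t. x \<in> {0..1} \<Longrightarrow> t \<ge> 0 \<Longrightarrow>
                ((\<lambda>y. u y t) has_real_derivative ux x t) (at x within {0..1})"
    and u_t: "\<And>x t. x \<in> {0..1} \<Longrightarrow> t \<ge> 0 \<Longrightarrow>
                ((\<lambda>s. u x s) has_real_derivative ut x t) (at t within {0..})"
    and u_xx: "\<And>x t. x \<in> {0..1} \<Longrightarrow> t \<ge> 0 \<Longrightarrow>
                ((\<lambda>y. ux y t) has_real_derivative uxx x t) (at x within {0..1})"
    and u_xt: "\<And>x t. x \<in> {0..1} \<Longrightarrow> t \<ge> 0 \<Longrightarrow>
                ((\<lambda>s. ux x s) has_real_derivative uxt x t) (at t within {0..})"
    and u_cont: "continuous_on ({0..1} \<times> {0..}) (\<lambda>(x,t). u x t)"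
    and ux_cont: "continuous_on ({0..1} \<times> {0..}) (\<lambda>(x,t). ux x t)"
    and ut_cont: "continuous_on ({0..1} \<times> {0..}) (\<lambda>(x,t). ut x t)"
    and uxx_cont: "continuous_on ({0..1} \<times> {0..}) (\<lambda>(x,t). uxx x t)"
    and uxt_cont: "continuous_on ({0..1} \<times> {0..}) (\<lambda>(x,t). uxt x t)"
    and ode: "\<And>t. t \<ge> 0 \<Longrightarrow> (X has_vector_derivative f (X t) (u 0 t)) (at t within {0..})"
    and pde: "\<And>x t. x \<in> {0..1} \<Longrightarrow> t \<ge> 0 \<Longrightarrow> ut x t = v (u x t) * ux x t"
    and pred: "\<And>x t. x \<in> {0..1} \<Longrightarrow> t \<ge> 0 \<Longrightarrow>
                ((\<lambda>y. Gam v (u y t) (ux y t) y *\<^sub>R f (p y t) (u y t)) has_integral (p x t - X t)) {0..x}"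
begin

definition weight :: "real \<Rightarrow> real \<Rightarrow> real" where
  "weight y s = Gam v (u y s) (ux y s) y"

definition weight_x :: "real \<Rightarrow> real \<Rightarrow> real" where
  "weight_x y s = - deriv v (u y s) * ux y s / v (u y s)^2
     - (deriv v (u y s) * ux y s + y * (deriv (deriv v) (u y s) * ux y s * ux y s + deriv v (u y s) * uxx y s))
       / v (u y s)^2
     + 2 * y * deriv v (u y s) * ux y s * deriv v (u y s) * ux y s / v (u y s)^3"

definition weight_t :: "real \<Rightarrow> real \<Rightarrow> real" where
  "weight_t y s = deriv v (u y s) * ux y s * weight y s + v (u y s) * weight_x y s"

definition px :: "real \<Rightarrow> real \<Rightarrow> 'a" where
  "px y s = weight y s *\<^sub>R f (p y s) (u y s)"

definition pt :: "real \<Rightarrow> real \<Rightarrow> 'a" where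
  "pt y s = v (u y s) *\<^sub>R px y s"

definition pt_x :: "real \<Rightarrow> real \<Rightarrow> 'a" where
  "pt_x y s = weight_t y s *\<^sub>R f (p y s) (u y s) + weight y s *\<^sub>R f' (p y s, u y s) (pt y s, ut y s)"

lemma v_neq_0: "v a \<noteq> 0"
  using v_pos[of a] by simp

lemma continuous_on_v: "continuous_on UNIV v" and continuous_on_deriv_v: "continuous_on UNIV (deriv v)"
  using v_d1 v_d2 by (meson DERIV_isCont continuous_at_imp_continuous_on)+

lemma continuous_on_f: "continuous_on UNIV (\<lambda>z. f (fst z) (snd z))"
  using f_C1 by (meson continuous_at_imp_continuous_on has_derivative_continuous)

lemma continuous_on_f_compose:
  assumes "continuous_on S a" and "continuous_on S b"
  shows "continuous_on S (\<lambda>w. f (a w) (b w))"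
  using continuous_on_compose2[OF continuous_on_f continuous_on_Pair[OF assms]] by simp

lemma continuous_on_weight: "continuous_on ({0..1} \<times> {0..}) (\<lambda>(y,s). weight y s)"
  and continuous_on_weight_t: "continuous_on ({0..1} \<times> {0..}) (\<lambda>(y,s). weight_t y s)"
proof -
  define S where "S = {0..1::real} \<times> {0::real..}"
  have cu: "continuous_on S (\<lambda>z. u (fst z) (snd z))" and cux: "continuous_on S (\<lambda>z. ux (fst z) (snd z))"
    and cuxx: "continuous_on S (\<lambda>z. uxx (fst z) (snd z))"
    using u_cont ux_cont uxx_cont by (simp_all add: S_def case_prod_beta)
  note comp = continuous_on_compose2[OF continuous_on_v cu] continuous_on_compose2[OF continuous_on_deriv_v cu]
    continuous_on_compose2[OF v_d2_cont cu]
  show "continuous_on ({0..1} \<times> {0..}) (\<lambda>(y,s). weight y s)"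
    unfolding weight_def Gam_def case_prod_beta S_def[symmetric]
    by (intro continuous_intros comp cux) (auto simp: v_neq_0)
  show "continuous_on ({0..1} \<times> {0..}) (\<lambda>(y,s). weight_t y s)"
    unfolding weight_t_def weight_x_def weight_def Gam_def case_prod_beta S_def[symmetric]
    by (intro continuous_intros comp cux cuxx) (auto simp: v_neq_0)
qed

lemma p_continuous: "0 \<le> s \<Longrightarrow> continuous_on {0..1} (\<lambda>y. p y s)"
  and p_has_derivative_x: "y \<in> {0..1} \<Longrightarrow> 0 \<le> s \<Longrightarrow>
    ((\<lambda>y. p y s) has_vector_derivative px y s) (at y within {0..1})"
proof -
  assume s: "0 \<le> s"
  have cH: "\<And>q. continuous_on {0..1} q \<Longrightarrow>
      continuous_on {0..1} (\<lambda>w. weight w s *\<^sub>R f (q w) (u w s))"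
    using s by (intro continuous_intros continuous_on_slice[OF continuous_on_weight]
        continuous_on_f_compose continuous_on_slice[OF u_cont])
  note int = pred[OF _ s, folded weight_def]
  show "continuous_on {0..1} (\<lambda>y. p y s)"
    by (rule integral_equation_derivative_Icc(1)[where H = "\<lambda>w z. weight w s *\<^sub>R f z (u w s)", OF int cH])
  show "((\<lambda>y. p y s) has_vector_derivative px y s) (at y within {0..1})" if "y \<in> {0..1}"
    using integral_equation_derivative_Icc(2)[where H = "\<lambda>w z. weight w s *\<^sub>R f z (u w s)", OF int cH that]
    by (simp add: px_def)
qed

lemma p_integral: "y \<in> {0..1} \<Longrightarrow> 0 \<le> s \<Longrightarrow> p y s = X s + integral {0..y} (\<lambda>w. px w s)"
  using integral_unique[OF pred] by (simp add: px_def weight_def)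

lemma p_at_0: "0 \<le> s \<Longrightarrow> p 0 s = X s"
  using p_integral[of 0 s] by simp

lemma weight_has_derivative_x:
  assumes "y \<in> {0..1}" and "0 \<le> s"
  shows "((\<lambda>w. weight w s) has_real_derivative weight_x y s) (at y within {0..1})"
  using Gam_has_real_derivative[OF v_d1 v_d2 v_neq_0 u_x[OF assms] u_xx[OF assms] DERIV_ident]
  by (simp add: weight_def weight_x_def)

lemma uxt_eq:
  assumes y: "y \<in> {0..1}" and t: "0 \<le> t"
  shows "uxt y t = deriv v (u y t) * ux y t * ux y t + v (u y t) * uxx y t"
proof -
  have "((\<lambda>w. v (u w t) * ux w t) has_real_derivative
      deriv v (u y t) * ux y t * ux y t + v (u y t) * uxx y t) (at y within {0..1})"
    using DERIV_chain2[OF v_d1 u_x[OF y t]] u_xx[OF y t]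
    by (auto intro!: derivative_eq_intros simp: algebra_simps)
  hence "((\<lambda>w. ut w t) has_real_derivative
      deriv v (u y t) * ux y t * ux y t + v (u y t) * uxx y t) (at y within {0..1})"
    by (rule has_field_derivative_transform_within[OF _ zero_less_one]) (use y t in \<open>auto simp: pde\<close>)
  moreover have "at y within {0..1} \<noteq> bot"
    using islimpt_Icc[of 0 1 y] trivial_limit_within[of y "{0..1::real}"] y by auto
  ultimately show ?thesis
    using has_field_derivative_unique
      mixed_partial_has_real_derivative[OF u_x u_t u_xt ux_cont uxt_cont y t] by blast
qed

text \<open>Here the PDE enters twice: through \<open>u\<^sub>t\<close> and, via \<open>uxt_eq\<close>, through \<open>u\<^sub>x\<^sub>t\<close>.\<close>
lemma weight_has_derivative_t:
  assumes y: "y \<in> {0..1}" and t: "0 \<le> t"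
  shows "((\<lambda>s. weight y s) has_real_derivative weight_t y t) (at t within {0..})"
proof -
  have "((\<lambda>s. weight y s) has_real_derivative
      - deriv v (u y t) * ut y t / v (u y t)^2
      - (0 * deriv v (u y t) * ux y t
         + y * (deriv (deriv v) (u y t) * ut y t * ux y t + deriv v (u y t) * uxt y t)) / v (u y t)^2
      + 2 * y * deriv v (u y t) * ux y t * deriv v (u y t) * ut y t / v (u y t)^3) (at t within {0..})"
    unfolding weight_def
    by (rule Gam_has_real_derivative[where c = "\<lambda>_. y", OF v_d1 v_d2 v_neq_0 u_t[OF y t] u_xt[OF y t] DERIV_const])
  moreover have "- deriv v (u y t) * ut y t / v (u y t)^2
      - (0 * deriv v (u y t) * ux y t
         + y * (deriv (deriv v) (u y t) * ut y t * ux y t + deriv v (u y t) * uxt y t)) / v (u y t)^2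
      + 2 * y * deriv v (u y t) * ux y t * deriv v (u y t) * ut y t / v (u y t)^3 = weight_t y t"
    unfolding weight_t_def weight_x_def weight_def Gam_def pde[OF y t] uxt_eq[OF y t]
    using v_neq_0[of "u y t"] by (simp add: field_simps power2_eq_square power3_eq_cube)
  ultimately show ?thesis by simp
qed

lemma continuous_on_pt: "0 \<le> s \<Longrightarrow> continuous_on {0..1} (\<lambda>y. pt y s)"
  unfolding pt_def px_def
  by (intro continuous_intros continuous_on_compose2[OF continuous_on_v continuous_on_slice[OF u_cont]]
      continuous_on_slice[OF continuous_on_weight] continuous_on_f_compose p_continuous
      continuous_on_slice[OF u_cont]) auto

lemma pt_has_derivative_x:
  assumes y: "y \<in> {0..1}" and s: "0 \<le> s"
  shows "((\<lambda>w. pt w s) has_vector_derivative pt_x y s) (at y within {0..1})"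
proof -
  have "((\<lambda>w. (p w s, u w s)) has_vector_derivative (px y s, ux y s)) (at y within {0..1})"
    using p_has_derivative_x[OF y s] u_x[OF y s]
    by (intro has_vector_derivative_Pair) (auto simp: has_real_derivative_iff_has_vector_derivative)
  from vector_derivative_diff_chain_within[OF this has_derivative_at_withinI[OF f_C1[of "(p y s, u y s)"]]]
  have df: "((\<lambda>w. f (p w s) (u w s)) has_vector_derivative f' (p y s, u y s) (px y s, ux y s))
      (at y within {0..1})"
    by (simp add: o_def)
  have "((\<lambda>w. v (u w s) *\<^sub>R (weight w s *\<^sub>R f (p w s) (u w s))) has_vector_derivative
      v (u y s) *\<^sub>R (weight y s *\<^sub>R f' (p y s, u y s) (px y s, ux y s) + weight_x y s *\<^sub>R f (p y s) (u y s))
      + (deriv v (u y s) * ux y s) *\<^sub>R (weight y s *\<^sub>R f (p y s) (u y s))) (at y within {0..1})"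
    by (intro has_vector_derivative_scaleR DERIV_chain2[OF v_d1 u_x[OF y s]]
        weight_has_derivative_x[OF y s] df)
  hence "((\<lambda>w. pt w s) has_vector_derivative
      v (u y s) *\<^sub>R (weight y s *\<^sub>R f' (p y s, u y s) (px y s, ux y s) + weight_x y s *\<^sub>R f (p y s) (u y s))
      + (deriv v (u y s) * ux y s) *\<^sub>R (weight y s *\<^sub>R f (p y s) (u y s))) (at y within {0..1})"
    by (simp add: pt_def[abs_def] px_def[abs_def])
  moreover have "f' (p y s, u y s) (pt y s, ut y s) = v (u y s) *\<^sub>R f' (p y s, u y s) (px y s, ux y s)"
    by (simp add: pt_def pde[OF y s] flip: blinfun.scaleR_right)
  hence "pt_x y s = v (u y s) *\<^sub>R (weight y s *\<^sub>R f' (p y s, u y s) (px y s, ux y s)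
      + weight_x y s *\<^sub>R f (p y s) (u y s)) + (deriv v (u y s) * ux y s) *\<^sub>R (weight y s *\<^sub>R f (p y s) (u y s))"
    by (simp add: pt_x_def weight_t_def algebra_simps)
  ultimately show ?thesis by simp
qed

lemma pt_integral:
  assumes y: "y \<in> {0..1}" and s: "0 \<le> s"
  shows "pt y s = f (X s) (u 0 s) + integral {0..y} (\<lambda>w. pt_x w s)"
proof -
  have "((\<lambda>w. pt_x w s) has_integral pt y s - pt 0 s) {0..y}"
  proof (rule fundamental_theorem_of_calculus)
    show "0 \<le> y" using y by simp
    show "((\<lambda>w. pt w s) has_vector_derivative pt_x z s) (at z within {0..y})" if "z \<in> {0..y}" for z
      using that y by (intro has_vector_derivative_within_subset[OF pt_has_derivative_x[OF _ s]]) auto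
  qed
  moreover have "pt 0 s = f (X s) (u 0 s)"
    using v_neq_0[of "u 0 s"] by (simp add: pt_def px_def weight_def Gam_def p_at_0[OF s])
  ultimately show ?thesis by (simp add: integral_unique)
qed

lemma p_has_derivative_t:
  assumes y: "y \<in> {0..1}" and t: "0 \<le> t"
  shows "((\<lambda>s. p y s) has_vector_derivative pt y t) (at t within {0..})"
  by (rule integral_equation_has_vector_derivative[where U = u and F = "\<lambda>z. f (fst z) (snd z)"
        and Xd = "f (X t) (u 0 t)" and Q = "\<lambda>y. pt y t",
        OF t weight_has_derivative_t continuous_on_weight continuous_on_weight_t u_t u_cont ut_cont
        f_C1 f'_cont p_continuous _ ode[OF t] continuous_on_pt[OF t] _ y])
     (simp_all add: t p_integral[unfolded px_def] pt_integral[unfolded pt_x_def])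

end

theorem lemma1:
  fixes f :: "real^'n \<Rightarrow> real \<Rightarrow> real^'n"
    and f' :: "(real^'n) \<times> real \<Rightarrow> ((real^'n) \<times> real) \<Rightarrow>\<^sub>L (real^'n)"
    and v :: "real \<Rightarrow> real" and vlow :: real
    and \<kappa> :: "real^'n \<Rightarrow> real"
    and \<kappa>' :: "real^'n \<Rightarrow> (real^'n) \<Rightarrow>\<^sub>L real"
    and \<kappa>'' :: "real^'n \<Rightarrow> (real^'n) \<Rightarrow>\<^sub>L ((real^'n) \<Rightarrow>\<^sub>L real)"
    and X :: "real \<Rightarrow> real^'n"
    and u ux ut uxx uxt utx utt :: "real \<Rightarrow> real \<Rightarrow> real"
    and p :: "real \<Rightarrow> real \<Rightarrow> real^'n"
  assumes f_C1: "\<And>z. ((\<lambda>z. f (fst z) (snd z)) has_derivative blinfun_apply (f' z)) (at z)"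
    and f'_cont: "continuous_on UNIV f'"
    and f0: "f 0 0 = 0"
    and v_d1: "\<And>a. (v has_real_derivative deriv v a) (at a)"
    and v_d2: "\<And>a. (deriv v has_real_derivative deriv (deriv v) a) (at a)"
    and v_d2_cont: "continuous_on UNIV (deriv (deriv v))"
    and vlow_pos: "vlow > 0" and v_lower: "\<And>a. v a \<ge> vlow"
    and \<kappa>_d1: "\<And>z. (\<kappa> has_derivative blinfun_apply (\<kappa>' z)) (at z)"
    and \<kappa>_d2: "\<And>z. (\<kappa>' has_derivative blinfun_apply (\<kappa>'' z)) (at z)"
    and \<kappa>''_cont: "continuous_on UNIV \<kappa>''"
    and \<kappa>0: "\<kappa> 0 = 0"
    and ISS: "ISS (\<lambda>Y \<omega>. f Y (\<kappa> Y + \<omega>))"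
    \<comment> \<open>u is a classical C^2 solution on [0,1] x [0,oo)\<close>
    and u_x: "\<And>x t. x \<in> {0..1} \<Longrightarrow> t \<ge> 0 \<Longrightarrow>
                ((\<lambda>y. u y t) has_real_derivative ux x t) (at x within {0..1})"
    and u_t: "\<And>x t. x \<in> {0..1} \<Longrightarrow> t \<ge> 0 \<Longrightarrow>
                ((\<lambda>s. u x s) has_real_derivative ut x t) (at t within {0..})"
    and u_xx: "\<And>x t. x \<in> {0..1} \<Longrightarrow> t \<ge> 0 \<Longrightarrow>
                ((\<lambda>y. ux y t) has_real_derivative uxx x t) (at x within {0..1})"
    and u_xt: "\<And>x t. x \<in> {0..1} \<Longrightarrow> t \<ge> 0 \<Longrightarrow>
                ((\<lambda>s. ux x s) has_real_derivative uxt x t) (at t within {0..})"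
    and u_tx: "\<And>x t. x \<in> {0..1} \<Longrightarrow> t \<ge> 0 \<Longrightarrow>
                ((\<lambda>y. ut y t) has_real_derivative utx x t) (at x within {0..1})"
    and u_tt: "\<And>x t. x \<in> {0..1} \<Longrightarrow> t \<ge> 0 \<Longrightarrow>
                ((\<lambda>s. ut x s) has_real_derivative utt x t) (at t within {0..})"
    and u_cont: "continuous_on ({0..1} \<times> {0..}) (\<lambda>(x,t). u x t)"
    and ux_cont: "continuous_on ({0..1} \<times> {0..}) (\<lambda>(x,t). ux x t)"
    and ut_cont: "continuous_on ({0..1} \<times> {0..}) (\<lambda>(x,t). ut x t)"
    and uxx_cont: "continuous_on ({0..1} \<times> {0..}) (\<lambda>(x,t). uxx x t)"
    and uxt_cont: "continuous_on ({0..1} \<times> {0..}) (\<lambda>(x,t). uxt x t)"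
    and utx_cont: "continuous_on ({0..1} \<times> {0..}) (\<lambda>(x,t). utx x t)"
    and utt_cont: "continuous_on ({0..1} \<times> {0..}) (\<lambda>(x,t). utt x t)"
    \<comment> \<open>the PDE-ODE cascade in closed loop\<close>
    and ode: "\<And>t. t \<ge> 0 \<Longrightarrow> (X has_vector_derivative f (X t) (u 0 t)) (at t within {0..})"
    and pde: "\<And>x t. x \<in> {0..1} \<Longrightarrow> t \<ge> 0 \<Longrightarrow> ut x t = v (u x t) * ux x t"
    and bc: "\<And>t. t \<ge> 0 \<Longrightarrow> u 1 t = \<kappa> (p 1 t)"
    \<comment> \<open>feasibility condition\<close>
    and feas: "\<exists>M>0. \<forall>x\<in>{0..1}. \<forall>t\<ge>0.
                 - M < deriv v (u x t) * ux x t / v (u x t) \<and> deriv v (u x t) * ux x t / v (u x t) < 1"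
    \<comment> \<open>the predictor state\<close>
    and pred: "\<And>x t. x \<in> {0..1} \<Longrightarrow> t \<ge> 0 \<Longrightarrow>
                ((\<lambda>y. Gam v (u y t) (ux y t) y *\<^sub>R f (p y t) (u y t)) has_integral (p x t - X t)) {0..x}"
  shows "(\<forall>x\<in>{0..1}. \<forall>t\<ge>0. \<exists>wx wt.
            ((\<lambda>y. u y t - \<kappa> (p y t)) has_real_derivative wx) (at x within {0..1}) \<and>
            ((\<lambda>s. u x s - \<kappa> (p x s)) has_real_derivative wt) (at t within {0..}) \<and>
            wt = v (u x t) * wx)
       \<and> (\<forall>t\<ge>0. u 1 t - \<kappa> (p 1 t) = 0)
       \<and> (\<forall>t\<ge>0. (X has_vector_derivative f (X t) (\<kappa> (X t) + (u 0 t - \<kappa> (p 0 t)))) (at t within {0..}))"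
proof -
  \<comment> \<open>Feasibility only serves to make \<open>p\<close> well defined; here \<open>p\<close> is given through \<open>pred\<close>.\<close>
  have v_pos: "\<And>a. 0 < v a" using v_lower vlow_pos by (meson less_le_trans)
  interpret predictor_transport f f' v X u ux ut uxx uxt p
    by unfold_locales (fact f_C1 f'_cont v_d1 v_d2 v_d2_cont v_pos u_x u_t u_xx u_xt u_cont ux_cont
        ut_cont uxx_cont uxt_cont ode pde pred)+
  have w_transport: "\<exists>wx wt.
      ((\<lambda>y. u y t - \<kappa> (p y t)) has_real_derivative wx) (at x within {0..1}) \<and>
      ((\<lambda>s. u x s - \<kappa> (p x s)) has_real_derivative wt) (at t within {0..}) \<and> wt = v (u x t) * wx"
    if x: "x \<in> {0..1}" and t: "0 \<le> t" for x t
  proof (intro exI conjI)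
    have \<kappa>_chain: "((\<lambda>z. \<kappa> (q z)) has_real_derivative \<kappa>' (q z0) q') (at z0 within S)"
      if "(q has_vector_derivative q') (at z0 within S)" for q q' z0 S
      using vector_derivative_diff_chain_within[OF that has_derivative_at_withinI[OF \<kappa>_d1]]
      by (simp add: o_def has_real_derivative_iff_has_vector_derivative)
    show "((\<lambda>y. u y t - \<kappa> (p y t)) has_real_derivative ux x t - \<kappa>' (p x t) (px x t)) (at x within {0..1})"
      by (intro DERIV_diff u_x[OF x t] \<kappa>_chain p_has_derivative_x[OF x t])
    show "((\<lambda>s. u x s - \<kappa> (p x s)) has_real_derivative ut x t - \<kappa>' (p x t) (pt x t)) (at t within {0..})"
      by (intro DERIV_diff u_t[OF x t] \<kappa>_chain p_has_derivative_t[OF x t])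
    show "ut x t - \<kappa>' (p x t) (pt x t) = v (u x t) * (ux x t - \<kappa>' (p x t) (px x t))"
      by (simp add: pt_def pde[OF x t] blinfun.scaleR_right right_diff_distrib)
  qed
  show ?thesis
    using w_transport bc ode p_at_0 by simp
qed

end
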